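(* Let $\mathcal C\subseteq\{0,1\}^K$ be a nonempty binary CW code of length $K$ and weight $\omega$ (not necessarily full). Then for every observation vector $\mathbf r\in\mathbb Z_{\ge0}^K$, every CSI $(\bar c_{\mathrm s},\bar c_{\mathrm n})\in(0,\infty)^2$ and every probability density $f_{\bar{\mathbf c}}$ on $(0,\infty)^2$, the set of coherent ML solutions $\arg\max_{\mathbf s\in\mathcal C} f_{\mathbf r}(\mathbf r\mid\bar{\mathbf c},\mathbf s)$ and the set of non-coherent ML solutions $\arg\max_{\mathbf s\in\mathcal C}\int\!\!\int f_{\mathbf r}(\mathbf r\mid\bar{\mathbf c},\mathbf s)f_{\bar{\mathbf c}}(\bar c_{\mathrm s},\bar c_{\mathrm n})\,\mathrm d\bar c_{\mathrm s}\,\mathrm d\bar c_{\mathrm n}$ are both equal to $\arg\max_{\mathbf s\in\mathcal C}\sum_{k=1}^K s[k]\,r[k]$; in particular they require neither instantaneous nor statistical CSI.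
   Context: Channel model: given CSI $\bar{\mathbf c}=(\bar c_{\mathrm s},\bar c_{\mathrm n})$ with $\bar c_{\mathrm s},\bar c_{\mathrm n}>0$ and a transmitted codeword $\mathbf s=[s[1],\dots,s[K]]^{\mathsf T}$, the observations $r[1],\dots,r[K]$ are independent with $r[k]$ Poisson of mean $s[k]\bar c_{\mathrm s}+\bar c_{\mathrm n}$, so $f_{\mathbf r}(\mathbf r\mid\bar{\mathbf c},\mathbf s)=\prod_{k=1}^K \frac{(\bar c_{\mathrm s}s[k]+\bar c_{\mathrm n})^{r[k]}e^{-\bar c_{\mathrm s}s[k]-\bar c_{\mathrm n}}}{r[k]!}$. A binary CW code of length $K$ and weight $\omega$ is a codebook $\mathcal C\subseteq\{0,1\}^K$ in which every codeword has exactly $\omega$ entries equal to $1$. *)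

theory Defs
  imports "HOL-Analysis.Analysis"
begin

text \<open>Vectors of length K are lists of length K; entry k (1-based in the paper) is xs ! (k-1).\<close>

definition is_CW_code :: "nat \<Rightarrow> nat \<Rightarrow> nat list set \<Rightarrow> bool" where
  "is_CW_code K \<omega> C \<longleftrightarrow>
     (\<forall>s\<in>C. length s = K \<and> set s \<subseteq> {0, 1} \<and> length (filter (\<lambda>x. x = 1) s) = \<omega>)"

definition lik :: "nat list \<Rightarrow> real \<Rightarrow> real \<Rightarrow> nat list \<Rightarrow> real" where
  "lik r cs cn s = (\<Prod>k<length r.
      (cs * real (s ! k) + cn) ^ (r ! k) * exp (- cs * real (s ! k) - cn) / fact (r ! k))"

definition noncoh_lik :: "nat list \<Rightarrow> (real \<times> real \<Rightarrow> real) \<Rightarrow> nat list \<Rightarrow> real" where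
  "noncoh_lik r f s = (LINT c : {0<..} \<times> {0<..} | lborel. lik r (fst c) (snd c) s * f c)"

definition is_density_pos2 :: "(real \<times> real \<Rightarrow> real) \<Rightarrow> bool" where
  "is_density_pos2 f \<longleftrightarrow> f \<in> borel_measurable borel \<and>
     (\<forall>c \<in> {0<..} \<times> {0<..}. f c \<ge> 0) \<and>
     set_integrable lborel ({0<..} \<times> {0<..}) f \<and>
     (LINT c : ({0<..} \<times> {0<..}) | lborel. f c) = (1::real)"

definition arg_max_on :: "('a \<Rightarrow> real) \<Rightarrow> 'a set \<Rightarrow> 'a set" where
  "arg_max_on g C = {s \<in> C. \<forall>s'\<in>C. g s' \<le> g s}"

definition corr :: "nat list \<Rightarrow> nat list \<Rightarrow> real" where
  "corr r s = (\<Sum>k<length r. real (s ! k) * real (r ! k))"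

end

theory Submission
  imports Defs
begin

text \<open>For a codeword s with entries in {0,1} and weight \<omega>, the Poisson likelihood factors as
  \<^verbatim>\<open>lik r cs cn s = B * exp (ln ((cs + cn) / cn) * corr r s - cs * \<omega>)\<close>
  where B depends only on r and cn: the constant weight makes the term exp(-cs \<omega>) common to all
  codewords. As ln((cs + cn) / cn) > 0 whenever cs, cn > 0, the likelihood is a strictly increasing
  function of the correlation, uniformly in the CSI. Averaging over any CSI density preserves the
  weak order by monotonicity of the integral, and also the strict order, because a pointwise
  strictly positive gap weighted by a density of total mass 1 has positive integral.\<close>

lemma power_div_fact_le_exp:
  fixes x :: real
  assumes "x \<ge> 0"
  shows "x ^ n / fact n \<le> exp x"
proof -
  have exp_series: "(\<lambda>n. x ^ n / fact n) sums exp x"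
    using exp_converges[of x] by (simp add: divide_inverse mult.commute scaleR_conv_of_real)
  have "(\<Sum>m\<in>{n}. x ^ m / fact m) \<le> (\<Sum>m. x ^ m / fact m)"
    by (rule sum_le_suminf) (use exp_series assms in \<open>auto simp: sums_iff\<close>)
  then show ?thesis
    using exp_series by (simp add: sums_iff)
qed

lemma poisson_pmf_le_1:
  fixes x :: real
  assumes "x \<ge> 0"
  shows "x ^ n * exp (- x) / fact n \<le> 1"
proof -
  have "x ^ n * exp (- x) / fact n = x ^ n / fact n * exp (- x)"
    by simp
  also have "\<dots> \<le> exp x * exp (- x)"
    using power_div_fact_le_exp[OF assms] by (rule mult_right_mono) simp
  also have "\<dots> = 1"
    by (simp add: exp_minus_inverse)
  finally show ?thesis .
qed

lemma lik_nonneg: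
  assumes "cs \<ge> 0" "cn \<ge> 0"
  shows "0 \<le> lik r cs cn s"
  unfolding lik_def using assms by (auto intro!: prod_nonneg)

lemma lik_le_1:
  assumes "cs \<ge> 0" "cn \<ge> 0"
  shows "lik r cs cn s \<le> 1"
  unfolding lik_def
proof (rule prod_le_1, intro conjI)
  fix k
  have mean: "0 \<le> cs * real (s ! k) + cn"
    using assms by simp
  then show "0 \<le> (cs * real (s ! k) + cn) ^ r ! k * exp (- cs * real (s ! k) - cn) / fact (r ! k)"
    by simp
  have "- cs * real (s ! k) - cn = - (cs * real (s ! k) + cn)"
    by simp
  then show "(cs * real (s ! k) + cn) ^ r ! k * exp (- cs * real (s ! k) - cn) / fact (r ! k) \<le> 1"
    using poisson_pmf_le_1[OF mean, of "r ! k"] by (simp only:)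
qed

lemma sum_list_binary:
  "set s \<subseteq> {0, 1} \<Longrightarrow> sum_list s = length (filter (\<lambda>x. x = (1::nat)) s)"
  by (induction s) auto

lemma poisson_binary_factor:
  assumes "x \<in> {0, 1::nat}" "cs > 0" "cn > 0"
  shows "(cs * real x + cn) ^ n * exp (- cs * real x - cn) / fact n
      = cn ^ n * exp (- cn) / fact n * exp (real x * (real n * ln ((cs + cn) / cn) - cs))"
proof (cases "x = 0")
  case False
  then have "x = 1"
    using assms(1) by auto
  have "(cs + cn) ^ n = cn ^ n * ((cs + cn) / cn) ^ n"
    using assms by (simp add: power_divide)
  also have "((cs + cn) / cn) ^ n = exp (real n * ln ((cs + cn) / cn))"
    using assms by (subst exp_of_nat_mult) simp
  finally show ?thesis
    using \<open>x = 1\<close> by (simp add: exp_diff exp_minus field_simps)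
qed simp

lemma lik_constant_weight_factorization:
  assumes "cs > 0" "cn > 0" "length s = length r" "set s \<subseteq> {0, 1}"
    and "length (filter (\<lambda>x. x = 1) s) = \<omega>"
  shows "lik r cs cn s = (\<Prod>k<length r. cn ^ (r ! k) * exp (- cn) / fact (r ! k))
          * exp (ln ((cs + cn) / cn) * corr r s - cs * real \<omega>)"
proof -
  define L where "L = ln ((cs + cn) / cn)"
  have "s ! k \<in> {0, 1}" if "k < length r" for k
    using that assms(3) assms(4)[THEN subsetD, OF nth_mem] by simp
  then have "lik r cs cn s = (\<Prod>k<length r. cn ^ (r ! k) * exp (- cn) / fact (r ! k)
       * exp (real (s ! k) * (real (r ! k) * L - cs)))"
    unfolding lik_def L_def using poisson_binary_factor assms(1,2) by (intro prod.cong) auto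
  also have "\<dots> = (\<Prod>k<length r. cn ^ (r ! k) * exp (- cn) / fact (r ! k))
       * exp (\<Sum>k<length r. real (s ! k) * (real (r ! k) * L - cs))"
    by (simp only: prod.distrib exp_sum finite_lessThan)
  also have "(\<Sum>k<length r. real (s ! k) * (real (r ! k) * L - cs))
      = L * corr r s - cs * (\<Sum>k<length s. real (s ! k))"
    unfolding corr_def assms(3)[symmetric]
    by (simp add: sum_subtractf sum_distrib_left algebra_simps)
  also have "(\<Sum>k<length s. real (s ! k)) = real \<omega>"
    using sum_list_binary[OF assms(4)] assms(5)
    by (simp add: sum_list_sum_nth atLeast0LessThan flip: of_nat_sum)
  finally show ?thesis
    unfolding L_def .
qed

lemma lik_le_iff_corr_le:
  assumes "cs > 0" "cn > 0"
    and "length s = length r" "set s \<subseteq> {0, 1}" "length (filter (\<lambda>x. x = 1) s) = \<omega>"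
    and "length s' = length r" "set s' \<subseteq> {0, 1}" "length (filter (\<lambda>x. x = 1) s') = \<omega>"
  shows "lik r cs cn s' \<le> lik r cs cn s \<longleftrightarrow> corr r s' \<le> corr r s"
proof -
  define B where "B = (\<Prod>k<length r. cn ^ (r ! k) * exp (- cn) / fact (r ! k))"
  define L where "L = ln ((cs + cn) / cn)"
  have "B > 0"
    unfolding B_def using assms(2) by (intro prod_pos) auto
  have "L > 0"
    unfolding L_def using assms(1,2) by simp
  have "lik r cs cn s = B * exp (L * corr r s - cs * real \<omega>)"
    "lik r cs cn s' = B * exp (L * corr r s' - cs * real \<omega>)"
    unfolding B_def L_def using assms by (simp_all only: lik_constant_weight_factorization)
  then have "lik r cs cn s' \<le> lik r cs cn s \<longleftrightarrow> L * corr r s' \<le> L * corr r s"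
    using \<open>B > 0\<close> by simp
  also have "\<dots> \<longleftrightarrow> corr r s' \<le> corr r s"
    by (rule mult_le_cancel_left_pos[OF \<open>L > 0\<close>])
  finally show ?thesis .
qed

lemma arg_max_on_cong_order:
  assumes "\<And>s s'. s \<in> C \<Longrightarrow> s' \<in> C \<Longrightarrow> g s' \<le> g s \<longleftrightarrow> h s' \<le> h s"
  shows "arg_max_on g C = arg_max_on h C"
  unfolding arg_max_on_def using assms by blast

text \<open>A strictly positive gap can vanish in the weighted integral only where the weight vanishes
  almost everywhere.\<close>

lemma set_integral_weighted_strict_mono:
  fixes u v w :: "'a \<Rightarrow> real"
  assumes int_u: "set_integrable M D (\<lambda>x. u x * w x)"
    and int_v: "set_integrable M D (\<lambda>x. v x * w x)"
    and gap: "\<And>x. x \<in> D \<Longrightarrow> u x < v x"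
    and w_nonneg: "\<And>x. x \<in> D \<Longrightarrow> 0 \<le> w x"
    and mass: "(LINT x:D|M. w x) \<noteq> 0"
  shows "(LINT x:D|M. u x * w x) < (LINT x:D|M. v x * w x)"
proof -
  define g where "g x = indicator D x * ((v x - u x) * w x)" for x
  have g_nonneg: "0 \<le> g x" for x
    using gap w_nonneg by (simp add: g_def indicator_def less_imp_le)
  have g_int: "integrable M g"
    using set_integral_diff(1)[OF int_v int_u]
    unfolding g_def set_integrable_def by (simp add: left_diff_distrib)
  have gap_integral: "(LINT x:D|M. v x * w x) - (LINT x:D|M. u x * w x) = integral\<^sup>L M g"
    using set_integral_diff(2)[OF int_v int_u]
    unfolding g_def set_lebesgue_integral_def by (simp add: left_diff_distrib)
  have "integral\<^sup>L M g \<noteq> 0"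
  proof
    assume "integral\<^sup>L M g = 0"
    then have "AE x in M. g x = 0"
      using integral_nonneg_eq_0_iff_AE[OF g_int] g_nonneg by simp
    then have "AE x in M. indicator D x *\<^sub>R w x = 0"
      by eventually_elim (auto simp: g_def indicator_def dest: gap)
    then have "(LINT x:D|M. w x) = 0"
      unfolding set_lebesgue_integral_def by (rule integral_eq_zero_AE)
    with mass show False ..
  qed
  moreover have "integral\<^sup>L M g \<ge> 0"
    using g_nonneg by simp
  ultimately show ?thesis
    using gap_integral by linarith
qed

lemma lik_weighted_set_integrable:
  assumes "is_density_pos2 f"
  shows "set_integrable lborel ({0<..} \<times> {0<..}) (\<lambda>c. lik r (fst c) (snd c) s * f c)"
proof (rule set_integrable_bound)
  show "set_integrable lborel ({0<..} \<times> {0<..}) f"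
    using assms unfolding is_density_pos2_def by blast
  have "(\<lambda>c. lik r (fst c) (snd c) s) \<in> borel_measurable borel"
    unfolding lik_def by (intro borel_measurable_continuous_onI continuous_intros) auto
  moreover have "f \<in> borel_measurable borel"
    using assms unfolding is_density_pos2_def by blast
  ultimately show "set_borel_measurable lborel ({0<..} \<times> {0<..}) (\<lambda>c. lik r (fst c) (snd c) s * f c)"
    unfolding set_borel_measurable_def by (simp add: borel_open open_Times)
  have "\<bar>lik r (fst c) (snd c) s * f c\<bar> \<le> \<bar>f c\<bar>" if "c \<in> {0<..} \<times> {0<..}" for c
    using that lik_nonneg[of "fst c" "snd c" r s] lik_le_1[of "fst c" "snd c" r s]
    by (auto simp: abs_mult intro!: mult_left_le_one_le)
  then show "AE c in lborel. c \<in> {0<..} \<times> {0<..} \<longrightarrow> norm (lik r (fst c) (snd c) s * f c) \<le> norm (f c)"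
    by auto
qed

lemma noncoh_lik_le_iff_corr_le:
  assumes density: "is_density_pos2 f"
    and "length s = length r" "set s \<subseteq> {0, 1}" "length (filter (\<lambda>x. x = 1) s) = \<omega>"
    and "length s' = length r" "set s' \<subseteq> {0, 1}" "length (filter (\<lambda>x. x = 1) s') = \<omega>"
  shows "noncoh_lik r f s' \<le> noncoh_lik r f s \<longleftrightarrow> corr r s' \<le> corr r s"
proof -
  define D :: "(real \<times> real) set" where "D = {0<..} \<times> {0<..}"
  have lik_order: "lik r (fst c) (snd c) t' \<le> lik r (fst c) (snd c) t \<longleftrightarrow> corr r t' \<le> corr r t"
    if "c \<in> D" "t \<in> {s, s'}" "t' \<in> {s, s'}" for c t t'
    using that assms(2-) lik_le_iff_corr_le[of "fst c" "snd c" t r \<omega> t'] unfolding D_def by auto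
  have f_nonneg: "\<And>c. c \<in> D \<Longrightarrow> 0 \<le> f c" and mass: "(LINT c:D|lborel. f c) \<noteq> 0"
    using density unfolding is_density_pos2_def D_def by auto
  have integrable: "\<And>t. set_integrable lborel D (\<lambda>c. lik r (fst c) (snd c) t * f c)"
    unfolding D_def by (rule lik_weighted_set_integrable[OF density])
  show ?thesis
  proof
    assume "noncoh_lik r f s' \<le> noncoh_lik r f s"
    show "corr r s' \<le> corr r s"
    proof (rule ccontr)
      assume "\<not> corr r s' \<le> corr r s"
      then have "lik r (fst c) (snd c) s < lik r (fst c) (snd c) s'" if "c \<in> D" for c
        using lik_order[OF that, of s s'] by (simp add: not_le)
      then have "noncoh_lik r f s < noncoh_lik r f s'"
        unfolding noncoh_lik_def D_def[symmetric]
        using set_integral_weighted_strict_mono[OF integrable integrable _ f_nonneg mass] by blast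
      with \<open>noncoh_lik r f s' \<le> noncoh_lik r f s\<close> show False
        by simp
    qed
  next
    assume "corr r s' \<le> corr r s"
    then have "lik r (fst c) (snd c) s' * f c \<le> lik r (fst c) (snd c) s * f c" if "c \<in> D" for c
      using lik_order[OF that, of s s'] f_nonneg[OF that] by (simp add: mult_right_mono)
    then show "noncoh_lik r f s' \<le> noncoh_lik r f s"
      unfolding noncoh_lik_def D_def[symmetric] by (rule set_integral_mono[OF integrable integrable])
  qed
qed

theorem corollary1:
  fixes K \<omega> :: nat and C :: "nat list set" and r :: "nat list"
    and cs cn :: real and f :: "real \<times> real \<Rightarrow> real"
  assumes "is_CW_code K \<omega> C" and "C \<noteq> {}"
    and "length r = K"
    and "cs > 0" and "cn > 0"
    and "is_density_pos2 f"
  shows "arg_max_on (lik r cs cn) C = arg_max_on (corr r) C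
       \<and> arg_max_on (noncoh_lik r f) C = arg_max_on (corr r) C"
proof -
  have codeword: "length s = length r \<and> set s \<subseteq> {0, 1} \<and> length (filter (\<lambda>x. x = 1) s) = \<omega>"
    if "s \<in> C" for s
    using assms(1,3) that unfolding is_CW_code_def by auto
  have "arg_max_on (lik r cs cn) C = arg_max_on (corr r) C"
  proof (rule arg_max_on_cong_order)
    fix s s' assume "s \<in> C" "s' \<in> C"
    with codeword show "lik r cs cn s' \<le> lik r cs cn s \<longleftrightarrow> corr r s' \<le> corr r s"
      by (intro lik_le_iff_corr_le[OF assms(4,5)]) auto
  qed
  moreover have "arg_max_on (noncoh_lik r f) C = arg_max_on (corr r) C"
  proof (rule arg_max_on_cong_order)
    fix s s' assume "s \<in> C" "s' \<in> C"
    with codeword show "noncoh_lik r f s' \<le> noncoh_lik r f s \<longleftrightarrow> corr r s' \<le> corr r s"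
      by (intro noncoh_lik_le_iff_corr_le[OF assms(6)]) auto
  qed
  ultimately show ?thesis ..
qed

end
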